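(* For a real root $\alpha$ let $\pi_\alpha:=\alpha\,(\alpha|\cdot)\in\mathrm{End}(\mathfrak h^* )$, i.e. $\pi_\alpha(x)=(\alpha|x)\alpha$. Define $X:\Delta^{\mathrm{re}}\to\mathrm{End}(\mathrm{Sym}^2(\mathfrak h^* ))$ by $$X(\alpha):=\pi_\alpha\otimes\pi_\alpha-\big(\pi_\alpha\otimes\mathrm{id}_{\mathfrak h^*}+\mathrm{id}_{\mathfrak h^*}\otimes\pi_\alpha\big)+\tfrac12\,\mathrm{id}_{\mathfrak h^*}\otimes\mathrm{id}_{\mathfrak h^*}$$ (restricted to the subspace $\mathrm{Sym}^2(\mathfrak h^* )\subseteq\mathfrak h^*\otimes\mathfrak h^*$ of symmetric tensors, which it preserves). Then for all real roots $\alpha,\beta$: $X(\alpha)X(\beta)-X(\beta)X(\alpha)=0$ if $(\alpha|\beta)=0$, and $X(\alpha)X(\beta)+X(\beta)X(\alpha)=X(\alpha\pm\beta)$ if $(\alpha|\beta)=\mp1$. Consequently the assignment $X_i\mapsto X(\alpha_i)\otimes\Gamma(\alpha_i)\in\mathrm{End}(\mathrm{Sym}^2(\mathfrak h^* )\otimes S)$ extends to a representation $\sigma$ of $\mathfrak k$.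
   Context: Let $A=(a_{ij})_{1\le i,j\le n}$ be a symmetrizable simply laced generalized Cartan matrix (off-diagonal entries $0$ or $-1$); the Dynkin diagram has an edge between $i\ne j$ iff $a_{ij}=-1$. Let $\mathfrak g$ be the split real Kac–Moody algebra of $A$ with Chevalley generators $e_i,f_i$, Cartan subalgebra $\mathfrak h$ (from a real realization), simple roots $\alpha_1,\dots,\alpha_n\in\mathfrak h^*$, set of real roots $\Delta^{\mathrm{re}}$, and let $(\cdot|\cdot)$ be the nondegenerate invariant symmetric bilinear form induced on $\mathfrak h^*$, with $(\alpha_i|\alpha_j)=a_{ij}$ (so $(\alpha|\alpha)=2$ for real roots). Let $\mathfrak k$ be the fixed-point subalgebra of the Chevalley involution ($e_i\mapsto -f_i$, $f_i\mapsto-e_i$, $h\mapsto -h$), with Berman generators $X_i=e_i-f_i$; $\mathfrak k$ is presented by generators $X_1,\dots,X_n$ and relations $[X_i,[X_i,X_j]]=-X_j$ if $a_{ij}=-1$, $[X_i,X_j]=0$ if $a_{ij}=0$. A generalized spin representation is a representation $\rho$ of $\mathfrak k$ with $\rho(X_i)^2=-\frac14\mathrm{id}$. Fix a finite-dimensional real vector space $S$ with positive definite inner product and orthonormal basis, and a generalized spin representation $\rho:\mathfrak k\to\mathrm{End}(S)$ whose values $\rho(X_i)$ are anti-symmetric real matrices in this basis (such exist, e.g. by realifying the generalized spin representations with compact image of Hainke–Köhl–Levy); put $\Gamma(\alpha_i):=2\rho(X_i)$. *)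

theory Defs
  imports "HOL-Analysis.Analysis"
begin

text \<open>Index type 'i of the simple roots (n = CARD('i)); 'd indexes a basis of h^*,
  so h^* = real^'d; S = real^'s with its standard orthonormal basis.\<close>

definition simply_laced_GCM :: "('i \<Rightarrow> 'i \<Rightarrow> int) \<Rightarrow> bool" where
  "simply_laced_GCM A \<longleftrightarrow> (\<forall>i. A i i = 2) \<and>
     (\<forall>i j. i \<noteq> j \<longrightarrow> A i j = 0 \<or> A i j = -1) \<and>
     (\<forall>i j. A i j = 0 \<longleftrightarrow> A j i = 0)"

definition symmetrizable :: "('i \<Rightarrow> 'i \<Rightarrow> int) \<Rightarrow> bool" where
  "symmetrizable A \<longleftrightarrow> (\<exists>d::'i \<Rightarrow> real. (\<forall>i. d i > 0) \<and>
     (\<forall>i j. d i * real_of_int (A i j) = d j * real_of_int (A j i)))"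

definition cartan_matrix :: "('i::finite \<Rightarrow> 'i \<Rightarrow> int) \<Rightarrow> real^'i^'i" where
  "cartan_matrix A = (\<chi> i j. real_of_int (A i j))"

text \<open>Real roots: the Weyl group orbit of the simple roots, where the simple reflection
  is s_i(x) = x - (alpha_i|x) alpha_i (simply laced, (alpha_i|alpha_i) = 2).\<close>
inductive_set real_roots :: "('v \<Rightarrow> 'v \<Rightarrow> real) \<Rightarrow> ('i \<Rightarrow> 'v::real_vector) \<Rightarrow> 'v set"
  for B :: "'v \<Rightarrow> 'v \<Rightarrow> real" and \<alpha> :: "'i \<Rightarrow> 'v" where
  simple: "\<alpha> i \<in> real_roots B \<alpha>"
| refl: "\<beta> \<in> real_roots B \<alpha> \<Longrightarrow> \<beta> - B (\<alpha> i) \<beta> *\<^sub>R \<alpha> i \<in> real_roots B \<alpha>"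

definition pi_op :: "('v \<Rightarrow> 'v \<Rightarrow> real) \<Rightarrow> 'v \<Rightarrow> 'v \<Rightarrow> 'v::real_vector" where
  "pi_op B a = (\<lambda>x. B a x *\<^sub>R a)"

text \<open>h^* \<otimes> h^* is identified with real^'d^'d (M$i$j = coefficient of e_i \<otimes> e_j);
  f \<otimes> g acts by M \<mapsto> F M G^T. Sym^2(h^*) = symmetric matrices.\<close>
definition tensor_op :: "(real^'d \<Rightarrow> real^'d) \<Rightarrow> (real^'d \<Rightarrow> real^'d) \<Rightarrow> real^'d^'d \<Rightarrow> real^'d^'d" where
  "tensor_op f g = (\<lambda>M. matrix f ** M ** transpose (matrix g))"

definition Sym2 :: "(real^'d^'d) set" where
  "Sym2 = {M. transpose M = M}"

definition Xop :: "(real^'d \<Rightarrow> real^'d \<Rightarrow> real) \<Rightarrow> real^'d \<Rightarrow> real^'d^'d \<Rightarrow> real^'d^'d" where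
  "Xop B a = (\<lambda>M. tensor_op (pi_op B a) (pi_op B a) M
      - (tensor_op (pi_op B a) id M + tensor_op id (pi_op B a) M)
      + (1/2) *\<^sub>R tensor_op id id M)"

text \<open>(h^* \<otimes> h^*) \<otimes> S is identified with (real^'d^'d)^'s (w$k = coefficient of e_k in S);
  f \<otimes> G acts by (f \<otimes> G)(w)$l = \<Sum>_k G$l$k f(w$k).\<close>
definition tensor_S :: "(real^'d^'d \<Rightarrow> real^'d^'d) \<Rightarrow> real^'s^'s \<Rightarrow> (real^'d^'d)^'s \<Rightarrow> (real^'d^'d)^'s" where
  "tensor_S f G = (\<lambda>w. \<chi> l. \<Sum>k\<in>UNIV. (G$l$k) *\<^sub>R f (w$k))"

definition Sym2_S :: "((real^'d^'d)^'s) set" where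
  "Sym2_S = {w. \<forall>k. w$k \<in> Sym2}"

text \<open>Since k is presented by these generators and relations,
  this is exactly a representation of k on U (X_i acting as f i).\<close>
definition comm :: "('w \<Rightarrow> 'w::real_vector) \<Rightarrow> ('w \<Rightarrow> 'w) \<Rightarrow> 'w \<Rightarrow> 'w" where
  "comm f g = (\<lambda>w. f (g w) - g (f w))"

definition k_rep_on :: "('i \<Rightarrow> 'i \<Rightarrow> int) \<Rightarrow> 'w set \<Rightarrow> ('i \<Rightarrow> 'w \<Rightarrow> 'w::real_vector) \<Rightarrow> bool" where
  "k_rep_on A U f \<longleftrightarrow> subspace U \<and> (\<forall>i. linear (f i)) \<and> (\<forall>i. f i ` U \<subseteq> U) \<and>
     (\<forall>i j. A i j = -1 \<longrightarrow> (\<forall>w\<in>U. comm (f i) (comm (f i) (f j)) w = - f j w)) \<and>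
     (\<forall>i j. A i j = 0 \<longrightarrow> (\<forall>w\<in>U. comm (f i) (f j) w = 0))"

definition gen_spin_rep :: "('i \<Rightarrow> 'i \<Rightarrow> int) \<Rightarrow> ('i \<Rightarrow> real^'s^'s) \<Rightarrow> bool" where
  "gen_spin_rep A R \<longleftrightarrow> k_rep_on A UNIV (\<lambda>i x. R i *v x) \<and>
     (\<forall>i. R i ** R i = (- 1/4) *\<^sub>R mat 1)"

end

theory Submission
  imports Defs
begin

text \<open>
  Let \<open>u\<close> be the vector representing \<open>(a|\<cdot>)\<close>, so that \<open>\<pi>\<^sub>a = a u\<^sup>T\<close>.
  Then the bilinear form \<open>x \<bullet> X(a)M y\<close> is an explicit polynomial in the pairings of
  \<open>x, y\<close> with \<open>a\<close> and with \<open>M\<close>; once \<open>(a|b)\<close> is fixed, the relations between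
  \<open>X(a)\<close> and \<open>X(b)\<close> on symmetric \<open>M\<close> reduce to identities between such polynomials.
  The matrices \<open>\<Gamma>\<^sub>i = 2\<rho>(X\<^sub>i)\<close> square to \<open>-1\<close>, commute for orthogonal
  and anticommute for adjacent simple roots. For \<open>\<sigma>\<^sub>i = X(\<alpha>\<^sub>i) \<otimes> \<Gamma>\<^sub>i\<close> this
  anticommutation turns the commutators in the Berman relations into anticommutators
  of the \<open>X(\<alpha>\<^sub>i)\<close>, and \<open>{X(\<alpha>\<^sub>i), {X(\<alpha>\<^sub>i), X(\<alpha>\<^sub>j)}} = {X(\<alpha>\<^sub>i), X(\<alpha>\<^sub>i+\<alpha>\<^sub>j)} = X(-\<alpha>\<^sub>j) = X(\<alpha>\<^sub>j)\<close>.
\<close>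

lemma matrix_eq_inner:
  fixes M N :: "real^'n^'m"
  assumes "\<And>x y. x \<bullet> (M *v y) = x \<bullet> (N *v y)"
  shows "M = N"
proof -
  have "M *v y = N *v y" for y
    using assms vector_eq_ldot by blast
  then show ?thesis by (simp add: matrix_eq)
qed

lemma matrix_mul_uminus_left: "(- A :: 'a::ring_1^'n^'m) ** C = - (A ** C)"
  by (simp add: matrix_matrix_mult_def vec_eq_iff sum_negf)

lemma matrix_mul_uminus_right: "(A :: 'a::ring_1^'n^'m) ** (- C) = - (A ** C)"
  by (simp add: matrix_matrix_mult_def vec_eq_iff sum_negf)

lemma matrix_vector_mult_uminus_left: "(- A :: 'a::ring_1^'n^'m) *v x = - (A *v x)"
  by (simp add: matrix_vector_mult_def vec_eq_iff sum_negf)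

lemma matrix_vector_mult_uminus_right: "(A :: 'a::ring_1^'n^'m) *v (- x) = - (A *v x)"
  by (simp add: matrix_vector_mult_def vec_eq_iff sum_negf)

definition anticomm :: "('w \<Rightarrow> 'w::real_vector) \<Rightarrow> ('w \<Rightarrow> 'w) \<Rightarrow> 'w \<Rightarrow> 'w" where
  "anticomm f g = (\<lambda>w. f (g w) + g (f w))"

lemma linear_anticomm: "linear f \<Longrightarrow> linear g \<Longrightarrow> linear (anticomm f g)"
  unfolding anticomm_def by (rule linearI) (simp_all add: linear_add linear_scale algebra_simps)

definition dual_vec :: "(real^'d \<Rightarrow> real^'d \<Rightarrow> real) \<Rightarrow> real^'d \<Rightarrow> real^'d" where
  "dual_vec B a = (\<chi> j. B a (axis j 1))"

lemma inner_dual_vec: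
  assumes "bilinear B"
  shows "z \<bullet> dual_vec B a = B a z"
proof -
  have "B a z = B a (\<Sum>j\<in>UNIV. z$j *\<^sub>R axis j 1)"
    using basis_expansion[of z] by (simp add: scalar_mult_eq_scaleR)
  also have "\<dots> = (\<Sum>j\<in>UNIV. z$j * B a (axis j 1))"
    using assms by (simp add: bilinear_def linear_sum linear_scale)
  finally show ?thesis by (simp add: dual_vec_def inner_vec_def)
qed

lemma dual_vec_add: "bilinear B \<Longrightarrow> dual_vec B (a + b) = dual_vec B a + dual_vec B b"
  by (simp add: dual_vec_def vec_eq_iff bilinear_ladd)

lemma Sym2_iff_inner: "M \<in> Sym2 \<longleftrightarrow> (\<forall>x y. x \<bullet> (M *v y) = y \<bullet> (M *v x))"
proof -
  have "x \<bullet> (transpose M *v y) = y \<bullet> (M *v x)" for x y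
    by (simp add: inner_commute flip: dot_lmul_matrix)
  moreover have "transpose M = M \<longleftrightarrow> (\<forall>x y. x \<bullet> (transpose M *v y) = x \<bullet> (M *v y))"
    by (auto intro: matrix_eq_inner simp del: transpose_matrix_vector)
  ultimately show ?thesis by (auto simp: Sym2_def)
qed

lemma subspace_Sym2: "subspace Sym2"
  unfolding subspace_def Sym2_def by (simp add: transpose_scalar vec_eq_iff transpose_def)


lemma matrix_pi_op: "matrix (pi_op B a) = (\<chi> i j. a$i * dual_vec B a $ j)"
  by (simp add: matrix_def pi_op_def dual_vec_def vec_eq_iff mult.commute)

lemma inner_tensor_op:
  "x \<bullet> (tensor_op f g M *v y) = (transpose (matrix f) *v x) \<bullet> (M *v (transpose (matrix g) *v y))"
  unfolding tensor_op_def by (simp add: matrix_vector_mul_assoc[symmetric] dot_lmul_matrix[symmetric])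

lemma inner_Xop:
  fixes B :: "real^'d \<Rightarrow> real^'d \<Rightarrow> real" and a :: "real^'d"
  defines "u \<equiv> dual_vec B a"
  shows "x \<bullet> (Xop B a M *v y) =
     (a \<bullet> x) * (a \<bullet> y) * (u \<bullet> (M *v u)) - (a \<bullet> x) * (u \<bullet> (M *v y)) - (a \<bullet> y) * (x \<bullet> (M *v u))
     + (1/2) * (x \<bullet> (M *v y))"
proof -
  have outer: "z v* (\<chi> i j. a$i * dual_vec B a $ j) = (a \<bullet> z) *\<^sub>R dual_vec B a" for z
    by (simp add: vector_matrix_mult_def inner_vec_def vec_eq_iff sum_distrib_left mult_ac)
  show ?thesis
    unfolding Xop_def
    by (simp add: algebra_simps inner_diff_right inner_add_right inner_tensor_op matrix_pi_op
        outer u_def matrix_id_mat_1 scaleR_matrix_vector_assoc[symmetric])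
qed

lemma Xop_Sym2:
  fixes B :: "real^'d \<Rightarrow> real^'d \<Rightarrow> real"
  shows "M \<in> Sym2 \<Longrightarrow> Xop B a M \<in> Sym2"
  by (simp add: Sym2_iff_inner inner_Xop)

lemma linear_Xop:
  fixes B :: "real^'d \<Rightarrow> real^'d \<Rightarrow> real"
  shows "linear (Xop B a)"
proof
  fix M N :: "real^'d^'d" and c :: real
  show "Xop B a (M + N) = Xop B a M + Xop B a N"
    by (rule matrix_eq_inner)
      (simp add: inner_Xop inner_add_right matrix_vector_mult_add_rdistrib algebra_simps)
  show "Xop B a (c *\<^sub>R M) = c *\<^sub>R Xop B a M"
    by (rule matrix_eq_inner)
      (simp add: inner_Xop scaleR_matrix_vector_assoc[symmetric] algebra_simps)
qed

lemma Xop_uminus: "bilinear B \<Longrightarrow> Xop B (- a) = Xop B a"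
  by (simp add: Xop_def pi_op_def bilinear_lneg)

lemma Xop_commute:
  fixes B :: "real^'d \<Rightarrow> real^'d \<Rightarrow> real"
  assumes "bilinear B" "B a b = 0" "B b a = 0" "M \<in> Sym2"
  shows "Xop B a (Xop B b M) = Xop B b (Xop B a M)"
proof (rule matrix_eq_inner)
  fix x y :: "real^'d"
  show "x \<bullet> (Xop B a (Xop B b M) *v y) = x \<bullet> (Xop B b (Xop B a M) *v y)"
    using assms(4) unfolding Sym2_iff_inner
    by (simp add: inner_Xop inner_dual_vec[OF assms(1)] assms(2,3) algebra_simps)
qed

lemma Xop_anticommute:
  fixes B :: "real^'d \<Rightarrow> real^'d \<Rightarrow> real"
  assumes "bilinear B" "B a b = -1" "B b a = -1" "M \<in> Sym2"
  shows "Xop B a (Xop B b M) + Xop B b (Xop B a M) = Xop B (a + b) M"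
proof (rule matrix_eq_inner)
  fix x y :: "real^'d"
  have "dual_vec B b \<bullet> (M *v dual_vec B a) = dual_vec B a \<bullet> (M *v dual_vec B b)"
    using assms(4) by (simp add: Sym2_iff_inner)
  then show "x \<bullet> ((Xop B a (Xop B b M) + Xop B b (Xop B a M)) *v y) = x \<bullet> (Xop B (a + b) M *v y)"
    by (simp add: inner_Xop inner_dual_vec[OF assms(1)] dual_vec_add[OF assms(1)] assms(2,3)
        inner_add_left inner_add_right matrix_vector_mult_add_rdistrib matrix_vector_right_distrib)
      (simp add: field_simps)
qed

lemma Xop_anticommute_diff:
  fixes B :: "real^'d \<Rightarrow> real^'d \<Rightarrow> real"
  assumes B: "bilinear B" and "B a b = 1" "B b a = 1" and M: "M \<in> Sym2"
  shows "Xop B a (Xop B b M) + Xop B b (Xop B a M) = Xop B (a - b) M"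
proof -
  have "B a (- b) = -1" "B (- b) a = -1"
    using assms(2,3) by (simp_all add: bilinear_rneg[OF B] bilinear_lneg[OF B])
  from Xop_anticommute[OF B this M] show ?thesis
    by (simp add: Xop_uminus[OF B])
qed

lemma Xop_anticomm_anticomm:
  fixes B :: "real^'d \<Rightarrow> real^'d \<Rightarrow> real"
  assumes B: "bilinear B" and "B a a = 2" "B a b = -1" "B b a = -1" and M: "M \<in> Sym2"
  shows "anticomm (Xop B a) (anticomm (Xop B a) (Xop B b)) M = Xop B b M"
proof -
  define c where "c = a + b"
  have anticomm_ab: "anticomm (Xop B a) (Xop B b) N = Xop B c N" if "N \<in> Sym2" for N
    using Xop_anticommute[OF B assms(3,4) that] by (simp add: anticomm_def c_def)
  have "B a c = 1" "B c a = 1"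
    using assms(2-4) by (simp_all add: c_def bilinear_radd[OF B] bilinear_ladd[OF B])
  then have "B a (- c) = -1" "B (- c) a = -1"
    by (simp_all add: bilinear_rneg[OF B] bilinear_lneg[OF B])
  then have "Xop B a (Xop B (- c) M) + Xop B (- c) (Xop B a M) = Xop B (a + - c) M"
    by (rule Xop_anticommute[OF B _ _ M])
  moreover have "a + - c = - b" by (simp add: c_def)
  ultimately have "Xop B a (Xop B c M) + Xop B c (Xop B a M) = Xop B b M"
    by (simp add: Xop_uminus[OF B])
  then show ?thesis
    unfolding anticomm_def[of "Xop B a" "anticomm (Xop B a) (Xop B b)"]
    using M by (simp add: anticomm_ab Xop_Sym2)
qed

lemma tensor_S_compose:
  assumes "linear f"
  shows "tensor_S f G (tensor_S g H w) = tensor_S (f \<circ> g) (G ** H) w"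
proof -
  have "(\<Sum>k\<in>UNIV. G$l$k *\<^sub>R f (\<Sum>m\<in>UNIV. H$k$m *\<^sub>R g (w$m)))
      = (\<Sum>m\<in>UNIV. (\<Sum>k\<in>UNIV. G$l$k * H$k$m) *\<^sub>R f (g (w$m)))" for l
  proof -
    have "(\<Sum>k\<in>UNIV. G$l$k *\<^sub>R f (\<Sum>m\<in>UNIV. H$k$m *\<^sub>R g (w$m)))
        = (\<Sum>k\<in>UNIV. \<Sum>m\<in>UNIV. (G$l$k * H$k$m) *\<^sub>R f (g (w$m)))"
      using assms by (simp add: linear_sum linear_scale scaleR_sum_right)
    also have "\<dots> = (\<Sum>m\<in>UNIV. \<Sum>k\<in>UNIV. (G$l$k * H$k$m) *\<^sub>R f (g (w$m)))"
      by (rule sum.swap)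
    finally show ?thesis by (simp add: scaleR_sum_left)
  qed
  then show ?thesis by (simp add: tensor_S_def matrix_matrix_mult_def)
qed

lemma tensor_S_cong: "(\<And>k. f (w$k) = g (w$k)) \<Longrightarrow> tensor_S f G w = tensor_S g G w"
  by (simp add: tensor_S_def)

lemma tensor_S_add: "tensor_S f G w + tensor_S g G w = tensor_S (\<lambda>M. f M + g M) G w"
  by (simp add: tensor_S_def vec_eq_iff scaleR_add_right sum.distrib)

lemma tensor_S_diff: "tensor_S f G w - tensor_S g G w = tensor_S (\<lambda>M. f M - g M) G w"
  by (simp add: tensor_S_def vec_eq_iff scaleR_diff_right sum_subtractf)

lemma tensor_S_uminus: "tensor_S f (- G) w = - tensor_S f G w"
  by (simp add: tensor_S_def vec_eq_iff sum_negf)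

lemma tensor_S_zero: "tensor_S (\<lambda>M. 0) G w = 0"
  by (simp add: tensor_S_def vec_eq_iff)

lemma linear_tensor_S: "linear f \<Longrightarrow> linear (tensor_S f G)"
  by (rule linearI) (simp_all add: tensor_S_def vec_eq_iff linear_add linear_scale
      scaleR_add_right sum.distrib scaleR_sum_right mult_ac)

lemma tensor_S_closed:
  assumes "subspace U" "f ` U \<subseteq> U" "\<forall>k. w$k \<in> U"
  shows "\<forall>k. tensor_S f G w $ k \<in> U"
  using assms unfolding tensor_S_def
  by (auto intro!: subspace_sum subspace_scale)

lemma comm_tensor_S_commuting:
  assumes "linear X" "linear Y" "H ** G = G ** H"
  shows "comm (tensor_S X G) (tensor_S Y H) = tensor_S (comm X Y) (G ** H)"
  using assms by (simp add: fun_eq_iff comm_def tensor_S_compose tensor_S_diff o_def)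

lemma comm_tensor_S_anticommuting:
  assumes "linear X" "linear Y" "H ** G = - (G ** H)"
  shows "comm (tensor_S X G) (tensor_S Y H) = tensor_S (anticomm X Y) (G ** H)"
  using assms
  by (simp add: fun_eq_iff comm_def anticomm_def tensor_S_compose tensor_S_uminus tensor_S_add o_def)

lemma gen_spin_rep_square: "gen_spin_rep A R \<Longrightarrow> R i *v (R i *v x) = (-1/4) *\<^sub>R x"
  unfolding gen_spin_rep_def
  by (simp add: matrix_vector_mul_assoc scaleR_matrix_vector_assoc[symmetric]
      matrix_vector_mult_uminus_left)

lemma gen_spin_rep_commute:
  assumes "gen_spin_rep A R" "A i j = 0"
  shows "R i ** R j = R j ** R i"
proof -
  have "\<forall>w. comm (\<lambda>x. R i *v x) (\<lambda>x. R j *v x) w = 0"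
    using assms unfolding gen_spin_rep_def k_rep_on_def by blast
  then show ?thesis
    by (simp add: comm_def matrix_eq matrix_vector_mul_assoc[symmetric])
qed

lemma gen_spin_rep_anticommute:
  assumes spin: "gen_spin_rep A R" and "A i j = -1"
  shows "R i ** R j = - (R j ** R i)"
proof -
  let ?P = "\<lambda>x. R i *v x" and ?Q = "\<lambda>x. R j *v x"
  have "comm ?P (comm ?P ?Q) x = - ?Q x" for x
    using assms unfolding gen_spin_rep_def k_rep_on_def by blast
  then have E: "(-1/4) *\<^sub>R ?Q x - ?P (?Q (?P x)) - (?P (?Q (?P x)) - (-1/4) *\<^sub>R ?Q x) = - ?Q x" for x
    by (simp add: comm_def matrix_vector_mult_diff_distrib gen_spin_rep_square[OF spin]
        matrix_vector_mult_scaleR matrix_vector_mult_uminus_right)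
  have PQP: "?P (?Q (?P x)) = (1/4) *\<^sub>R ?Q x" for x
    unfolding vec_eq_iff
  proof
    fix k
    show "?P (?Q (?P x)) $ k = ((1/4) *\<^sub>R ?Q x) $ k"
      using arg_cong[OF E[of x], of "\<lambda>v. v $ k"] by simp
  qed
  have "?P (?Q x) = - ?Q (?P x)" for x
  proof -
    have "- ((1/4) *\<^sub>R ?P (?Q x)) = (1/4) *\<^sub>R ?Q (?P x)"
      using PQP[of "?P x"] by (simp add: gen_spin_rep_square[OF spin] matrix_vector_mult_scaleR
          matrix_vector_mult_uminus_right)
    then have "(-4) *\<^sub>R (- ((1/4) *\<^sub>R ?P (?Q x))) = (-4) *\<^sub>R ((1/4) *\<^sub>R ?Q (?P x))"
      by (rule arg_cong)
    then show ?thesis by simp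
  qed
  then show ?thesis
    by (simp add: matrix_eq matrix_vector_mul_assoc[symmetric] matrix_vector_mult_uminus_left)
qed

lemma gen_spin_rep_Gamma:
  assumes "gen_spin_rep A R"
  shows "(2 *\<^sub>R R i) ** (2 *\<^sub>R R i) = - mat 1"
    and "A i j = 0 \<Longrightarrow> (2 *\<^sub>R R i) ** (2 *\<^sub>R R j) = (2 *\<^sub>R R j) ** (2 *\<^sub>R R i)"
    and "A i j = -1 \<Longrightarrow> (2 *\<^sub>R R i) ** (2 *\<^sub>R R j) = - ((2 *\<^sub>R R j) ** (2 *\<^sub>R R i))"
  using assms gen_spin_rep_commute[OF assms] gen_spin_rep_anticommute[OF assms]
  by (simp_all add: gen_spin_rep_def matrix_scalar_ac scalar_matrix_assoc[symmetric])

lemma k_rep_on_tensor_S: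
  fixes X :: "'i \<Rightarrow> real^'d^'d \<Rightarrow> real^'d^'d" and G :: "'i \<Rightarrow> real^'s^'s"
  assumes U: "subspace U"
    and X_linear: "\<And>i. linear (X i)" and X_closed: "\<And>i. X i ` U \<subseteq> U"
    and X_commute: "\<And>i j M. A i j = 0 \<Longrightarrow> M \<in> U \<Longrightarrow> X i (X j M) = X j (X i M)"
    and X_anticomm:
      "\<And>i j M. A i j = -1 \<Longrightarrow> M \<in> U \<Longrightarrow> anticomm (X i) (anticomm (X i) (X j)) M = X j M"
    and G_square: "\<And>i. G i ** G i = - mat 1"
    and G_commute: "\<And>i j. A i j = 0 \<Longrightarrow> G i ** G j = G j ** G i"
    and G_anticommute: "\<And>i j. A i j = -1 \<Longrightarrow> G i ** G j = - (G j ** G i)"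
  shows "k_rep_on A {w. \<forall>k. w$k \<in> U} (\<lambda>i. tensor_S (X i) (G i))"
  unfolding k_rep_on_def
proof (intro conjI allI impI ballI)
  show "subspace {w. \<forall>k. w$k \<in> U}"
    using U by (simp add: subspace_def)
  show "linear (tensor_S (X i) (G i))" for i
    by (rule linear_tensor_S[OF X_linear])
  show "tensor_S (X i) (G i) ` {w. \<forall>k. w$k \<in> U} \<subseteq> {w. \<forall>k. w$k \<in> U}" for i
    using tensor_S_closed[OF U X_closed] by blast
next
  fix i j and w :: "(real^'d^'d)^'s"
  assume ij: "A i j = 0" and w: "w \<in> {w. \<forall>k. w$k \<in> U}"
  have "comm (tensor_S (X i) (G i)) (tensor_S (X j) (G j)) w
      = tensor_S (comm (X i) (X j)) (G i ** G j) w"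
    using G_commute[OF ij] by (simp add: comm_tensor_S_commuting X_linear)
  also have "\<dots> = tensor_S (\<lambda>M. 0) (G i ** G j) w"
    using w by (intro tensor_S_cong) (simp add: comm_def X_commute[OF ij])
  finally show "comm (tensor_S (X i) (G i)) (tensor_S (X j) (G j)) w = 0"
    by (simp add: tensor_S_zero)
next
  fix i j and w :: "(real^'d^'d)^'s"
  assume ij: "A i j = -1" and w: "w \<in> {w. \<forall>k. w$k \<in> U}"
  have G_ji: "G j ** G i = - (G i ** G j)"
    using G_anticommute[OF ij] by simp
  have G_iji: "(G i ** G j) ** G i = - (G i ** (G i ** G j))"
    by (simp add: matrix_mul_assoc[symmetric] G_ji matrix_mul_uminus_right)
  have "comm (tensor_S (X i) (G i)) (comm (tensor_S (X i) (G i)) (tensor_S (X j) (G j))) w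
      = comm (tensor_S (X i) (G i)) (tensor_S (anticomm (X i) (X j)) (G i ** G j)) w"
    by (simp add: comm_tensor_S_anticommuting X_linear G_ji)
  also have "\<dots> = tensor_S (anticomm (X i) (anticomm (X i) (X j))) (G i ** (G i ** G j)) w"
    by (simp add: comm_tensor_S_anticommuting X_linear linear_anticomm G_iji)
  also have "G i ** (G i ** G j) = - G j"
    by (simp add: matrix_mul_assoc G_square matrix_mul_uminus_left)
  also have "tensor_S (anticomm (X i) (anticomm (X i) (X j))) (- G j) w = - tensor_S (X j) (G j) w"
    using w by (simp add: tensor_S_uminus X_anticomm[OF ij] cong: tensor_S_cong)
  finally show "comm (tensor_S (X i) (G i)) (comm (tensor_S (X i) (G i)) (tensor_S (X j) (G j))) w
      = - tensor_S (X j) (G j) w" .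
qed

theorem proposition6p5:
  fixes A :: "'i::finite \<Rightarrow> 'i \<Rightarrow> int"
    and B :: "real^'d \<Rightarrow> real^'d \<Rightarrow> real"
    and \<alpha> :: "'i \<Rightarrow> real^'d"
    and R :: "'i \<Rightarrow> real^'s^'s"
  assumes GCM: "simply_laced_GCM A" and symm: "symmetrizable A"
    and dim_h: "CARD('d) = 2 * CARD('i) - rank (cartan_matrix A)"
    and indep: "independent (range \<alpha>)" and inj: "inj \<alpha>"
    and bil: "bilinear B" and Bsym: "\<forall>x y. B x y = B y x"
    and nondeg: "\<forall>x. (\<forall>y. B x y = 0) \<longrightarrow> x = 0"
    and Bsimple: "\<forall>i j. B (\<alpha> i) (\<alpha> j) = real_of_int (A i j)"
    and spin: "gen_spin_rep A R"
    and antisym: "\<forall>i. transpose (R i) = - R i"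
  shows "(\<forall>a\<in>real_roots B \<alpha>. \<forall>M\<in>Sym2. Xop B a M \<in> Sym2)
       \<and> (\<forall>a\<in>real_roots B \<alpha>. \<forall>b\<in>real_roots B \<alpha>. B a b = 0 \<longrightarrow>
            (\<forall>M\<in>Sym2. Xop B a (Xop B b M) - Xop B b (Xop B a M) = 0))
       \<and> (\<forall>a\<in>real_roots B \<alpha>. \<forall>b\<in>real_roots B \<alpha>. B a b = -1 \<longrightarrow>
            (\<forall>M\<in>Sym2. Xop B a (Xop B b M) + Xop B b (Xop B a M) = Xop B (a + b) M))
       \<and> (\<forall>a\<in>real_roots B \<alpha>. \<forall>b\<in>real_roots B \<alpha>. B a b = 1 \<longrightarrow>
            (\<forall>M\<in>Sym2. Xop B a (Xop B b M) + Xop B b (Xop B a M) = Xop B (a - b) M))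
       \<and> k_rep_on A Sym2_S (\<lambda>i. tensor_S (Xop B (\<alpha> i)) (2 *\<^sub>R R i))"
proof -
  \<comment> \<open>Of the hypotheses on \<open>A\<close>, \<open>B\<close> and \<open>R\<close> only bilinearity and symmetry of \<open>B\<close>,
    its values on simple roots and the spin relations are needed; the root relations
    even hold for arbitrary vectors \<open>a, b\<close>.\<close>
  have B_swap: "B b a = B a b" for a b
    using Bsym by blast
  have B_simple_square: "B (\<alpha> i) (\<alpha> i) = 2" for i
    using GCM Bsimple by (simp add: simply_laced_GCM_def)
  have "k_rep_on A {w. \<forall>k. w$k \<in> Sym2} (\<lambda>i. tensor_S (Xop B (\<alpha> i)) (2 *\<^sub>R R i))"
  proof (rule k_rep_on_tensor_S[OF subspace_Sym2 linear_Xop _ _ _ gen_spin_rep_Gamma[OF spin]])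
    show "Xop B (\<alpha> i) ` Sym2 \<subseteq> Sym2" for i
      using Xop_Sym2 by blast
    show "Xop B (\<alpha> i) (Xop B (\<alpha> j) M) = Xop B (\<alpha> j) (Xop B (\<alpha> i) M)"
      if "A i j = 0" "M \<in> Sym2" for i j M
      using that Bsimple B_swap[of "\<alpha> i" "\<alpha> j"] by (intro Xop_commute[OF bil]) simp_all
    show "anticomm (Xop B (\<alpha> i)) (anticomm (Xop B (\<alpha> i)) (Xop B (\<alpha> j))) M = Xop B (\<alpha> j) M"
      if "A i j = -1" "M \<in> Sym2" for i j M
      using that Bsimple B_swap[of "\<alpha> i" "\<alpha> j"] B_simple_square
      by (intro Xop_anticomm_anticomm[OF bil]) simp_all
  qed
  then show ?thesis
    using B_swap by (simp add: Sym2_S_def Xop_Sym2 Xop_commute[OF bil] Xop_anticommute[OF bil]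
        Xop_anticommute_diff[OF bil])
qed

end
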